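(* Let $\widetilde W\subset S^{n+1}$ be a spherical convex body. Then $\widetilde W=\widetilde W^{\circ}$ if and only if $\widetilde W$ is of constant width $\pi/2$.
   Context: For $P\in S^{n+1}$, $H(P)=\{Q\in S^{n+1}:P\cdot Q\ge0\}$. A subset of $S^{n+1}$ is hemispherical if it is disjoint from some $H(P)$. The arc $PQ$ is $\{((1-t)P+tQ)/\|(1-t)P+tQ\|:t\in[0,1]\}$, of length $|PQ|=\arccos(P\cdot Q)$. A spherical convex body is a closed hemispherical set with nonempty interior containing the arc $PQ$ for all its points $P,Q$. The spherical polar set is $\widetilde W^\circ=\bigcap_{P\in\widetilde W}H(P)$. $H(P)$ supports $\widetilde W$ if $\widetilde W\subset H(P)$ and $\partial\widetilde W\cap\partial H(P)\ne\emptyset$. The lune $H(P)\cap H(Q)$ ($P\ne\pm Q$) has thickness $\Delta(H(P)\cap H(Q))=\pi-|PQ|$. For $H(P)$ supporting $\widetilde W$, $\mathrm{width}_{H(P)}\widetilde W$ is the minimum of $\Delta(H(P)\cap H(Q))$ over hemispheres $H(Q)$ supporting $\widetilde W$ with $\widetilde W\subset H(P)\cap H(Q)$. $\widetilde W$ is of constant width $\rho$ ($0<\rho<\pi$) if $\mathrm{width}_{H(P)}\widetilde W=\rho$ for every supporting hemisphere $H(P)$. *)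

theory Defs
  imports "HOL-Analysis.Analysis"
begin

text \<open>The unit sphere S^{n+1} sits in a Euclidean space 'a of dimension n+2.\<close>

definition Sph :: "'a::euclidean_space set" where
  "Sph = sphere 0 1"

definition hemi :: "'a::euclidean_space \<Rightarrow> 'a set" where
  "hemi P = {Q \<in> Sph. P \<bullet> Q \<ge> 0}"

definition hemispherical :: "'a::euclidean_space set \<Rightarrow> bool" where
  "hemispherical W \<longleftrightarrow> (\<exists>P \<in> Sph. W \<inter> hemi P = {})"

definition sarc :: "'a::euclidean_space \<Rightarrow> 'a \<Rightarrow> 'a set" where
  "sarc P Q = {((1 - t) *\<^sub>R P + t *\<^sub>R Q) /\<^sub>R norm ((1 - t) *\<^sub>R P + t *\<^sub>R Q) | t. t \<in> {0..1}}"

definition spherical_convex_body :: "'a::euclidean_space set \<Rightarrow> bool" where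
  "spherical_convex_body W \<longleftrightarrow>
     W \<subseteq> Sph \<and> closed W \<and> hemispherical W \<and>
     (top_of_set Sph) interior_of W \<noteq> {} \<and>
     (\<forall>P \<in> W. \<forall>Q \<in> W. sarc P Q \<subseteq> W)"

definition spolar :: "'a::euclidean_space set \<Rightarrow> 'a set" where
  "spolar W = Sph \<inter> (\<Inter>P \<in> W. hemi P)"

definition supports :: "'a::euclidean_space \<Rightarrow> 'a set \<Rightarrow> bool" where
  "supports P W \<longleftrightarrow> W \<subseteq> hemi P \<and>
     (top_of_set Sph) frontier_of W \<inter> (top_of_set Sph) frontier_of (hemi P) \<noteq> {}"

definition lune_thickness :: "'a::euclidean_space \<Rightarrow> 'a \<Rightarrow> real" where
  "lune_thickness P Q = pi - arccos (P \<bullet> Q)"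

definition width_candidates :: "'a::euclidean_space \<Rightarrow> 'a set \<Rightarrow> real set" where
  "width_candidates P W = {lune_thickness P Q | Q. Q \<in> Sph \<and> Q \<noteq> P \<and> Q \<noteq> - P \<and>
      supports Q W \<and> W \<subseteq> hemi P \<inter> hemi Q}"

definition is_width :: "'a::euclidean_space \<Rightarrow> 'a set \<Rightarrow> real \<Rightarrow> bool" where
  "is_width P W w \<longleftrightarrow> w \<in> width_candidates P W \<and> (\<forall>x \<in> width_candidates P W. w \<le> x)"

definition constant_width :: "'a::euclidean_space set \<Rightarrow> real \<Rightarrow> bool" where
  "constant_width W \<rho> \<longleftrightarrow> 0 < \<rho> \<and> \<rho> < pi \<and>
     (\<forall>P \<in> Sph. supports P W \<longrightarrow> is_width P W \<rho>)"

end

theory Submission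
  imports Defs
begin

text \<open>
  If W is self-polar, the pole P of a supporting hemisphere lies in W, and the contact point X
  of H(P) is the pole of a second supporting hemisphere, through P; this lune has thickness
  pi/2, and no lune is thinner because all supporting poles lie in W = W\<degree> and so have
  nonnegative inner product with P.

  Conversely, width pi/2 forces any two supporting poles to have nonnegative inner product.
  If some X \<in> W\<degree> lay outside W, the point Y of W closest to X yields (via the first-order
  condition at Y) a supporting pole P with X \<bullet> P < 0; tilting H(X) away from P until it
  touches W gives a supporting pole R with P \<bullet> R < 0. If W were not contained in W\<degree>, a most
  distant pair X, Y of W yields a supporting pole P orthogonal to X, and from it one builds
  orthonormal families of supporting poles orthogonal to X of every size: the normalised sum
  of such a family is again a supporting pole, and a supporting pole orthogonal to it must be
  orthogonal to every member, hence to P, hence also to X since Y is a combination of X (with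
  negative coefficient) and P. This contradicts finite dimension.
\<close>

lemma Sph_iff: "x \<in> Sph \<longleftrightarrow> x \<bullet> x = 1"
  by (simp add: Sph_def norm_eq_1)

lemma minus_in_Sph_iff [simp]: "- x \<in> Sph \<longleftrightarrow> x \<in> Sph"
  by (simp add: Sph_def)

lemma sgn_in_Sph: "v \<noteq> 0 \<Longrightarrow> sgn v \<in> Sph"
  by (simp add: Sph_def norm_sgn)

lemma inner_sgn_left: "sgn v \<bullet> x = (v \<bullet> x) / norm v"
  by (simp add: sgn_div_norm divide_inverse mult.commute)

lemma inner_sgn_right: "x \<bullet> sgn v = (x \<bullet> v) / norm v"
  by (simp add: sgn_div_norm divide_inverse mult.commute)

lemma Sph_inner_bounds:
  assumes "x \<in> Sph" "y \<in> Sph"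
  shows "-1 \<le> x \<bullet> y" "x \<bullet> y \<le> 1"
  using Cauchy_Schwarz_ineq2[of x y] assms by (auto simp: Sph_def)

lemma Sph_inner_eq_1:
  assumes "x \<in> Sph" "y \<in> Sph" "x \<bullet> y = 1"
  shows "y = x"
  using norm_cauchy_schwarz_eq[of x y] assms by (simp add: Sph_def)

lemma orthogonal_component_nonzero:
  assumes "X \<in> Sph" "Y \<in> Sph" "Y \<noteq> X" "Y \<noteq> - X"
  shows "Y - (X \<bullet> Y) *\<^sub>R X \<noteq> 0"
proof
  assume "Y - (X \<bullet> Y) *\<^sub>R X = 0"
  then have Y: "Y = (X \<bullet> Y) *\<^sub>R X"
    by simp
  then have "(X \<bullet> Y)\<^sup>2 = 1"
    using assms(1,2) by (metis Sph_iff inner_scaleR_left inner_scaleR_right mult.assoc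
        mult.right_neutral power2_eq_square)
  then have "X \<bullet> Y = 1 \<or> X \<bullet> Y = -1"
    by (simp add: power2_eq_1_iff)
  with Y assms(3,4) show False
    by auto
qed

lemma zero_in_sarc_antipodal: "0 \<in> sarc X (- X)"
  unfolding sarc_def by (intro CollectI exI[of _ "1/2"]) auto

lemma rotation_in_Sph:
  assumes "Z \<in> Sph" "R \<in> Sph" "Z \<bullet> R = 0"
  shows "cos e *\<^sub>R Z + sin e *\<^sub>R R \<in> Sph"
proof -
  have "(cos e *\<^sub>R Z + sin e *\<^sub>R R) \<bullet> (cos e *\<^sub>R Z + sin e *\<^sub>R R)
      = (cos e)\<^sup>2 * (Z \<bullet> Z) + (sin e)\<^sup>2 * (R \<bullet> R) + 2 * cos e * sin e * (Z \<bullet> R)"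
    by (simp add: inner_add_left inner_add_right inner_commute power2_eq_square algebra_simps)
  also have "\<dots> = 1"
    using assms by (simp add: Sph_iff)
  finally show ?thesis
    by (simp add: Sph_iff)
qed

lemma small_rotation_in_open:
  fixes Z R :: "'a::real_normed_vector"
  assumes "open U" "Z \<in> U"
  obtains e where "0 < e" "e < pi" "cos e *\<^sub>R Z + sin e *\<^sub>R R \<in> U"
proof -
  have "((\<lambda>e. cos e *\<^sub>R Z + sin e *\<^sub>R R) \<longlongrightarrow> cos 0 *\<^sub>R Z + sin 0 *\<^sub>R R) (at_right 0)"
    by (intro tendsto_intros)
  then have "\<forall>\<^sub>F e in at_right 0. cos e *\<^sub>R Z + sin e *\<^sub>R R \<in> U"
    using topological_tendstoD assms by simp
  moreover have "\<forall>\<^sub>F e in at_right (0::real). e \<in> {0<..<pi}"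
    by (rule eventually_at_right_real) simp
  ultimately have "\<forall>\<^sub>F e in at_right (0::real). cos e *\<^sub>R Z + sin e *\<^sub>R R \<in> U \<and> e \<in> {0<..<pi}"
    by eventually_elim simp
  then show ?thesis
    using that by (auto dest: eventually_happens)
qed

lemma frontier_of_subset_hemi:
  assumes "S \<subseteq> hemi R" "R \<in> Sph" "Z \<in> S" "Z \<bullet> R = 0"
  shows "Z \<in> (top_of_set Sph) frontier_of S"
proof -
  have "S \<subseteq> Sph"
    using assms(1) by (auto simp: hemi_def)
  then have "Z \<in> (top_of_set Sph) closure_of S"
    using closure_of_subset[of S "top_of_set Sph"] assms(3) by auto
  moreover have "Z \<notin> (top_of_set Sph) interior_of S"
  proof
    assume "Z \<in> (top_of_set Sph) interior_of S"
    then obtain U where U: "open U" "Z \<in> U" "Sph \<inter> U \<subseteq> S"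
      unfolding interior_of_def openin_open by auto
    obtain e where e: "0 < e" "e < pi" "cos e *\<^sub>R Z + sin e *\<^sub>R (- R) \<in> U"
      using small_rotation_in_open[OF U(1,2)] by blast
    have "cos e *\<^sub>R Z + sin e *\<^sub>R (- R) \<in> Sph"
      using assms \<open>S \<subseteq> Sph\<close> by (intro rotation_in_Sph) auto
    with e U assms(1) have "0 \<le> R \<bullet> (cos e *\<^sub>R Z + sin e *\<^sub>R (- R))"
      by (auto simp: hemi_def)
    also have "\<dots> = - sin e"
      using assms by (simp add: inner_add_right inner_diff_right inner_commute Sph_iff)
    finally show False
      using sin_gt_zero[OF e(1,2)] by simp
  qed
  ultimately show ?thesis
    by (simp add: frontier_of_def)
qed

lemma supportsI:
  assumes "W \<subseteq> hemi R" "R \<in> Sph" "Z \<in> W" "Z \<bullet> R = 0"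
  shows "supports R W"
proof -
  have "Z \<in> (top_of_set Sph) frontier_of W"
    using frontier_of_subset_hemi assms by blast
  moreover have "Z \<in> (top_of_set Sph) frontier_of (hemi R)"
    using assms by (intro frontier_of_subset_hemi) auto
  ultimately show ?thesis
    using assms(1) by (auto simp: supports_def)
qed

lemma supports_sgn:
  assumes "W \<subseteq> Sph" "\<And>Z. Z \<in> W \<Longrightarrow> 0 \<le> Z \<bullet> v" "Z \<in> W" "Z \<bullet> v = 0" "v \<noteq> 0"
  shows "supports (sgn v) W"
proof (rule supportsI[OF _ sgn_in_Sph[OF assms(5)] assms(3)])
  show "W \<subseteq> hemi (sgn v)"
    using assms(1,2) by (auto simp: hemi_def inner_sgn_left inner_commute[of v])
  show "Z \<bullet> sgn v = 0"
    using assms(4) by (simp add: inner_sgn_right)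
qed

lemma frontier_of_hemi:
  assumes "X \<in> (top_of_set Sph) frontier_of (hemi P)"
  shows "X \<bullet> P = 0"
proof -
  have "closedin (top_of_set Sph) (hemi P)"
    using closed_halfspace_ge[of 0 P] by (auto simp: closedin_closed hemi_def)
  then have X: "X \<in> hemi P"
    using assms closure_of_closedin by (auto simp: frontier_of_def)
  then have "X \<in> Sph"
    by (simp add: hemi_def)
  have "openin (top_of_set Sph) (Sph \<inter> {x. 0 < P \<bullet> x})"
    using open_halfspace_gt[of 0 P] by (auto simp: openin_open)
  moreover have "Sph \<inter> {x. 0 < P \<bullet> x} \<subseteq> hemi P"
    by (auto simp: hemi_def)
  ultimately have "Sph \<inter> {x. 0 < P \<bullet> x} \<subseteq> (top_of_set Sph) interior_of (hemi P)"
    by (rule interior_of_maximal[rotated])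
  with assms \<open>X \<in> Sph\<close> have "\<not> 0 < P \<bullet> X"
    by (auto simp: frontier_of_def)
  with X show "X \<bullet> P = 0"
    by (auto simp: hemi_def inner_commute)
qed

lemma exists_not_orthogonal:
  assumes "(top_of_set Sph) interior_of W \<noteq> {}" "P \<in> Sph"
  obtains Z where "Z \<in> W" "Z \<bullet> P \<noteq> 0"
proof -
  obtain Z0 U where U: "open U" "Z0 \<in> U" "Sph \<inter> U \<subseteq> W" "Z0 \<in> Sph"
    using assms(1) unfolding interior_of_def openin_open by auto
  show ?thesis
  proof (cases "Z0 \<bullet> P = 0")
    case False
    with U that show ?thesis by blast
  next
    case True
    obtain e where e: "0 < e" "e < pi" "cos e *\<^sub>R Z0 + sin e *\<^sub>R P \<in> U"
      using small_rotation_in_open[OF U(1,2)] by blast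
    have "cos e *\<^sub>R Z0 + sin e *\<^sub>R P \<in> Sph"
      using True U assms by (intro rotation_in_Sph) auto
    with e U have "cos e *\<^sub>R Z0 + sin e *\<^sub>R P \<in> W"
      by auto
    moreover have "(cos e *\<^sub>R Z0 + sin e *\<^sub>R P) \<bullet> P = sin e"
      using True assms by (simp add: inner_add_left Sph_iff)
    ultimately show ?thesis
      using that sin_gt_zero[OF e(1,2)] by auto
  qed
qed

lemma spherical_convex_bodyD:
  assumes "spherical_convex_body W"
  shows "W \<subseteq> Sph" "compact W" "W \<noteq> {}" "(top_of_set Sph) interior_of W \<noteq> {}"
    "\<And>P Q. P \<in> W \<Longrightarrow> Q \<in> W \<Longrightarrow> sarc P Q \<subseteq> W"
proof -
  show W: "W \<subseteq> Sph" "(top_of_set Sph) interior_of W \<noteq> {}"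
    "\<And>P Q. P \<in> W \<Longrightarrow> Q \<in> W \<Longrightarrow> sarc P Q \<subseteq> W"
    using assms by (auto simp: spherical_convex_body_def)
  show "compact W"
    using assms bounded_subset[OF bounded_sphere W(1)[unfolded Sph_def]]
    by (auto simp: compact_eq_bounded_closed spherical_convex_body_def)
  show "W \<noteq> {}"
    using W(2) interior_of_subset[of "top_of_set Sph" W] by auto
qed

lemma norm_chord_le:
  assumes "X \<in> Sph" "Z \<in> Sph" "0 \<le> t" "t \<le> 1"
  shows "norm ((1 - t) *\<^sub>R X + t *\<^sub>R Z) \<le> 1 - t * (1 - t) * (1 - X \<bullet> Z)"
proof (rule power2_le_imp_le)
  define u where "u = t * (1 - t) * (1 - X \<bullet> Z)"
  have "0 \<le> (t - 1 / 2)\<^sup>2"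
    by simp
  then have "t * (1 - t) \<le> 1 / 4"
    by (simp add: power2_eq_square algebra_simps)
  moreover have "0 \<le> t * (1 - t)" "0 \<le> 1 - X \<bullet> Z" "1 - X \<bullet> Z \<le> 2"
    using assms Sph_inner_bounds[of X Z] by auto
  ultimately have "u \<le> 1 / 4 * 2"
    unfolding u_def by (intro mult_mono) auto
  then show "0 \<le> 1 - t * (1 - t) * (1 - X \<bullet> Z)"
    by (simp add: u_def)
  have "(norm ((1 - t) *\<^sub>R X + t *\<^sub>R Z))\<^sup>2
      = (1 - t)\<^sup>2 * (X \<bullet> X) + 2 * t * (1 - t) * (X \<bullet> Z) + t\<^sup>2 * (Z \<bullet> Z)"
    unfolding power2_norm_eq_inner
    by (simp add: inner_commute power2_eq_square algebra_simps)
  also have "\<dots> = 1 - 2 * u"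
    using assms by (simp add: Sph_iff u_def power2_eq_square algebra_simps)
  also have "\<dots> \<le> (1 - u)\<^sup>2"
    by (simp add: power2_eq_square algebra_simps)
  finally show "(norm ((1 - t) *\<^sub>R X + t *\<^sub>R Z))\<^sup>2 \<le> (1 - t * (1 - t) * (1 - X \<bullet> Z))\<^sup>2"
    by (simp add: u_def)
qed

text \<open>The conclusion says that the inner product with Y has nonnegative derivative at X
  along the arc towards Z; it is obtained by comparing X with arc points at parameter t and
  letting t tend to 0, using the chord estimate above.\<close>

lemma arc_min_first_order:
  assumes XS: "X \<in> Sph" and YS: "Y \<in> Sph" and ZS: "Z \<in> Sph" and c0: "X \<bullet> Y \<le> 0"
    and min: "\<And>V. V \<in> sarc X Z \<Longrightarrow> X \<bullet> Y \<le> V \<bullet> Y"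
  shows "(X \<bullet> Y) * (X \<bullet> Z) \<le> Z \<bullet> Y"
proof -
  define c a b where "c = X \<bullet> Y" and "a = Z \<bullet> Y" and "b = X \<bullet> Z"
  have bounds: "-1 \<le> c" "c \<le> 1" "-1 \<le> a" "a \<le> 1" "-1 \<le> b" "b \<le> 1"
    using Sph_inner_bounds[OF XS YS] Sph_inner_bounds[OF ZS YS] Sph_inner_bounds[OF XS ZS]
    by (auto simp: c_def a_def b_def)
  have step: "c * b - a \<le> 2 * t" if t: "0 < t" "t \<le> 1" for t
  proof -
    define V where "V = (1 - t) *\<^sub>R X + t *\<^sub>R Z"
    have "c * norm V \<le> V \<bullet> Y"
    proof (cases "V = 0")
      case False
      have arc: "V /\<^sub>R norm V \<in> sarc X Z"
        unfolding sarc_def V_def using t by auto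
      have "c \<le> (V \<bullet> Y) / norm V"
        using min[OF arc] by (simp add: c_def divide_inverse mult.commute)
      then show ?thesis
        using False by (simp add: pos_le_divide_eq)
    qed simp
    moreover have "c * (1 - t * (1 - t) * (1 - b)) \<le> c * norm V"
      using norm_chord_le[OF XS ZS, of t] t c0 by (intro mult_left_mono_neg) (auto simp: V_def b_def c_def)
    moreover have "V \<bullet> Y = (1 - t) * c + t * a"
      by (simp add: V_def inner_add_left c_def a_def)
    ultimately have "t * (c * b - a) \<le> t * (- c * t * (1 - b))"
      by (simp add: algebra_simps)
    then have "c * b - a \<le> - c * t * (1 - b)"
      using t mult_le_cancel_left_pos[of t "c * b - a" "- c * t * (1 - b)"] by simp
    also have "\<dots> \<le> 2 * t"
    proof -
      have "- c * (1 - b) \<le> 1 * 2"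
        using bounds by (intro mult_mono) auto
      then show ?thesis
        using t mult_right_mono[of "- c * (1 - b)" 2 t] by (simp add: algebra_simps)
    qed
    finally show ?thesis .
  qed
  show ?thesis
  proof (rule ccontr)
    assume "\<not> ?thesis"
    then have "0 < c * b - a"
      by (simp add: a_def b_def c_def)
    moreover have "\<bar>c * b\<bar> \<le> 1"
      using bounds by (simp add: abs_mult mult_le_one abs_le_iff)
    then have "c * b - a \<le> 2"
      using bounds by simp
    ultimately show False
      using step[of "(c * b - a) / 4"] by (simp add: mult.commute)
  qed
qed

text \<open>Take t maximal with W on the nonnegative side of X - t P (bounded thanks to Z0); if no
  point of W were on the boundary, compactness of W would allow a larger t.\<close>

lemma exists_supporting_tilt:
  fixes W :: "'a::euclidean_space set"
  assumes W: "compact W" and X: "\<And>Z. Z \<in> W \<Longrightarrow> 0 \<le> Z \<bullet> X"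
    and Z0: "Z0 \<in> W" "0 < Z0 \<bullet> P"
  obtains t Z1 where "0 \<le> t" "\<And>Z. Z \<in> W \<Longrightarrow> 0 \<le> Z \<bullet> (X - t *\<^sub>R P)"
    "Z1 \<in> W" "Z1 \<bullet> (X - t *\<^sub>R P) = 0"
proof -
  define T where "T = {t. 0 \<le> t \<and> (\<forall>Z\<in>W. 0 \<le> Z \<bullet> (X - t *\<^sub>R P))}"
  have "0 \<in> T"
    using X by (simp add: T_def)
  have "bdd_above T"
  proof (rule bdd_aboveI)
    fix t assume "t \<in> T"
    then have "t * (Z0 \<bullet> P) \<le> Z0 \<bullet> X"
      using Z0 by (auto simp: T_def inner_diff_right)
    then show "t \<le> (Z0 \<bullet> X) / (Z0 \<bullet> P)"
      using Z0 by (simp add: pos_le_divide_eq)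
  qed
  have "T = {0..} \<inter> (\<Inter>Z\<in>W. {t. 0 \<le> Z \<bullet> X - t * (Z \<bullet> P)})"
    by (auto simp: T_def inner_diff_right)
  moreover have "closed ({0..} \<inter> (\<Inter>Z\<in>W. {t::real. 0 \<le> Z \<bullet> X - t * (Z \<bullet> P)}))"
    by (intro closed_Int closed_INT ballI closed_Collect_le continuous_intros)
  ultimately have "closed T"
    by simp
  define ts where "ts = Sup T"
  have ts: "ts \<in> T"
    unfolding ts_def using \<open>0 \<in> T\<close> \<open>bdd_above T\<close> \<open>closed T\<close> by (intro closed_contains_Sup) auto
  have "W \<noteq> {}"
    using Z0 by auto
  have cont: "continuous_on W (\<lambda>Z. Z \<bullet> (X - ts *\<^sub>R P))" "continuous_on W (\<lambda>Z. Z \<bullet> P)"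
    by (intro continuous_intros)+
  obtain Zm Zp where
    Zm: "Zm \<in> W" "\<And>Z. Z \<in> W \<Longrightarrow> Zm \<bullet> (X - ts *\<^sub>R P) \<le> Z \<bullet> (X - ts *\<^sub>R P)" and
    Zp: "Zp \<in> W" "\<And>Z. Z \<in> W \<Longrightarrow> Z \<bullet> P \<le> Zp \<bullet> P"
    using continuous_attains_inf[OF W \<open>W \<noteq> {}\<close> cont(1)]
      continuous_attains_sup[OF W \<open>W \<noteq> {}\<close> cont(2)]
    by blast
  define m where "m = Zm \<bullet> (X - ts *\<^sub>R P)"
  define M where "M = Zp \<bullet> P"
  have "0 < M"
    using Zp Z0 by (force simp: M_def)
  have "m = 0"
  proof (rule ccontr)
    assume "m \<noteq> 0"
    then have "0 < m"
      using ts Zm(1) by (auto simp: T_def m_def less_le)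
    have "ts + m / M \<in> T"
      unfolding T_def
    proof (intro CollectI conjI ballI)
      show "0 \<le> ts + m / M"
        using ts \<open>0 < m\<close> \<open>0 < M\<close> by (simp add: T_def)
      fix Z assume "Z \<in> W"
      have "m / M * (Z \<bullet> P) \<le> m / M * M"
        using Zp(2)[OF \<open>Z \<in> W\<close>] \<open>0 < m\<close> \<open>0 < M\<close> by (intro mult_left_mono) (auto simp: M_def)
      moreover have "m \<le> Z \<bullet> (X - ts *\<^sub>R P)"
        using Zm(2)[OF \<open>Z \<in> W\<close>] by (simp add: m_def)
      ultimately show "0 \<le> Z \<bullet> (X - (ts + m / M) *\<^sub>R P)"
        using \<open>0 < M\<close> by (simp add: inner_diff_right algebra_simps)
    qed
    then have "ts + m / M \<le> ts"
      unfolding ts_def using \<open>bdd_above T\<close> by (rule cSup_upper)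
    with \<open>0 < m\<close> \<open>0 < M\<close> show False
      by (simp add: field_simps)
  qed
  then show ?thesis
    using that[of ts Zm] ts Zm(1) by (auto simp: T_def m_def)
qed

lemma exists_orthogonal_supporting:
  assumes "constant_width W (pi / 2)" "P \<in> Sph" "supports P W"
  obtains Q where "Q \<in> Sph" "supports Q W" "P \<bullet> Q = 0"
proof -
  have "pi / 2 \<in> width_candidates P W"
    using assms by (auto simp: constant_width_def is_width_def)
  then obtain Q where Q: "pi / 2 = pi - arccos (P \<bullet> Q)" "Q \<in> Sph" "supports Q W"
    unfolding width_candidates_def lune_thickness_def by blast
  have "arccos (P \<bullet> Q) = pi / 2"
    using Q(1) by simp
  then have "P \<bullet> Q = cos (pi / 2)"
    using Sph_inner_bounds[OF assms(2) Q(2)] cos_arccos by metis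
  then show ?thesis
    by (intro that[OF Q(2,3)]) simp
qed

text \<open>For width pi/2 any two supporting hemispheres make a lune of thickness at least pi/2;
  the degenerate pair Q = -P is excluded since W has interior points.\<close>

lemma supporting_inner_nonneg:
  assumes cw: "constant_width W (pi / 2)" and int: "(top_of_set Sph) interior_of W \<noteq> {}"
    and P: "P \<in> Sph" "supports P W" and Q: "Q \<in> Sph" "supports Q W"
  shows "0 \<le> P \<bullet> Q"
proof -
  consider "Q = P" | "Q = - P" | "Q \<noteq> P" "Q \<noteq> - P"
    by blast
  then show ?thesis
  proof cases
    case 1
    then show ?thesis
      using P by (simp add: Sph_iff)
  next
    case 2
    obtain Z where "Z \<in> W" "Z \<bullet> P \<noteq> 0"
      using exists_not_orthogonal[OF int P(1)] .
    moreover have "W \<subseteq> hemi P" "W \<subseteq> hemi (- P)"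
      using P Q 2 by (auto simp: supports_def)
    ultimately show ?thesis
      by (force simp: hemi_def inner_commute)
  next
    case 3
    then have "lune_thickness P Q \<in> width_candidates P W"
      using P Q by (auto simp: width_candidates_def supports_def)
    moreover have "is_width P W (pi / 2)"
      using cw P by (auto simp: constant_width_def)
    ultimately have "arccos (P \<bullet> Q) \<le> pi / 2"
      by (auto simp: is_width_def lune_thickness_def)
    then have "0 \<le> cos (arccos (P \<bullet> Q))"
      using arccos_lbound[of "P \<bullet> Q"] Sph_inner_bounds[OF P(1) Q(1)] by (intro cos_ge_zero) auto
    then show ?thesis
      using Sph_inner_bounds[OF P(1) Q(1)] by simp
  qed
qed

text \<open>The normalised sum of the family is a supporting pole touching W at X; a supporting pole
  orthogonal to it has nonnegative inner product with each member, and these products sum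
  to 0.\<close>

lemma exists_supporting_orthogonal_to_family:
  assumes cw: "constant_width W (pi / 2)" and W: "W \<subseteq> Sph"
    and int: "(top_of_set Sph) interior_of W \<noteq> {}" and X: "X \<in> W"
    and G: "finite G" "G \<noteq> {}" "G \<subseteq> Sph" "pairwise orthogonal G"
    and supp: "\<And>Q. Q \<in> G \<Longrightarrow> supports Q W" and orth: "\<And>Q. Q \<in> G \<Longrightarrow> X \<bullet> Q = 0"
  obtains Q' where "Q' \<in> Sph" "supports Q' W" "\<And>Q. Q \<in> G \<Longrightarrow> Q' \<bullet> Q = 0"
proof -
  define v where "v = (\<Sum>Q\<in>G. Q)"
  have inner_v: "Z \<bullet> v = (\<Sum>Q\<in>G. Z \<bullet> Q)" for Z
    by (simp add: v_def inner_sum_right)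
  have "Q \<bullet> v = 1" if "Q \<in> G" for Q
  proof -
    have "(\<Sum>Q'\<in>G. Q \<bullet> Q') = Q \<bullet> Q + (\<Sum>Q'\<in>G - {Q}. Q \<bullet> Q')"
      using G(1) that by (simp add: sum.remove)
    also have "(\<Sum>Q'\<in>G - {Q}. Q \<bullet> Q') = 0"
      using G(4) that by (intro sum.neutral) (auto simp: pairwise_def orthogonal_def)
    finally show ?thesis
      using that G(3) by (auto simp: inner_v Sph_iff)
  qed
  then have "v \<noteq> 0"
    using G(2) by force
  have nonneg: "0 \<le> Z \<bullet> Q" if "Z \<in> W" "Q \<in> G" for Z Q
    using supp[OF that(2)] that(1) by (auto simp: supports_def hemi_def inner_commute)
  have "supports (sgn v) W"
    using W X \<open>v \<noteq> 0\<close> orth nonneg by (intro supports_sgn) (auto simp: inner_v intro: sum_nonneg)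
  then obtain Q' where Q': "Q' \<in> Sph" "supports Q' W" "sgn v \<bullet> Q' = 0"
    using exists_orthogonal_supporting[OF cw sgn_in_Sph[OF \<open>v \<noteq> 0\<close>]] by blast
  have "Q' \<bullet> v = 0"
    using Q'(3) \<open>v \<noteq> 0\<close> by (simp add: inner_sgn_left inner_commute[of v Q'])
  then have "(\<Sum>Q\<in>G. Q' \<bullet> Q) = 0"
    by (simp add: inner_v)
  moreover have "0 \<le> Q' \<bullet> Q" if "Q \<in> G" for Q
    using supporting_inner_nonneg[OF cw int Q'(1,2)] supp[OF that] G(3) that by blast
  ultimately have "\<And>Q. Q \<in> G \<Longrightarrow> Q' \<bullet> Q = 0"
    using sum_nonneg_eq_0_iff[OF G(1)] by blast
  with Q' that show ?thesis
    by blast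
qed

text \<open>Otherwise the lemma above would produce orthonormal families of supporting poles orthogonal
  to X of every size.\<close>

lemma exists_supporting_orthogonal_off_point:
  fixes W :: "'a::euclidean_space set"
  assumes cw: "constant_width W (pi / 2)" and W: "W \<subseteq> Sph"
    and int: "(top_of_set Sph) interior_of W \<noteq> {}" and X: "X \<in> W"
    and P: "P \<in> Sph" "supports P W" "X \<bullet> P = 0"
  obtains Q where "Q \<in> Sph" "supports Q W" "Q \<bullet> P = 0" "Q \<bullet> X \<noteq> 0"
proof (rule ccontr)
  assume "\<not> thesis"
  with that have through_X: "\<And>Q. Q \<in> Sph \<Longrightarrow> supports Q W \<Longrightarrow> Q \<bullet> P = 0 \<Longrightarrow> Q \<bullet> X = 0"
    by blast
  define family where "family G \<longleftrightarrow> finite G \<and> P \<in> G \<and> G \<subseteq> Sph \<and> pairwise orthogonal G \<and>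
      (\<forall>Q\<in>G. supports Q W \<and> X \<bullet> Q = 0)" for G
  have "\<exists>G. family G \<and> card G = Suc k" for k
  proof (induction k)
    case 0
    show ?case
      using P by (intro exI[of _ "{P}"]) (auto simp: family_def)
  next
    case (Suc k)
    then obtain G where G: "family G" "card G = Suc k"
      by blast
    then have "finite G" "G \<noteq> {}" "G \<subseteq> Sph" "pairwise orthogonal G"
      "\<And>Q. Q \<in> G \<Longrightarrow> supports Q W" "\<And>Q. Q \<in> G \<Longrightarrow> X \<bullet> Q = 0"
      by (auto simp: family_def)
    then obtain Q' where Q': "Q' \<in> Sph" "supports Q' W" "\<And>Q. Q \<in> G \<Longrightarrow> Q' \<bullet> Q = 0"
      using exists_supporting_orthogonal_to_family[OF cw W int X] by metis
    have "Q' \<notin> G"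
      using Q'(1) Q'(3)[of Q'] by (auto simp: Sph_iff)
    moreover have "X \<bullet> Q' = 0"
      using through_X[OF Q'(1,2) Q'(3)] G(1) by (simp add: family_def inner_commute)
    ultimately have "family (insert Q' G) \<and> card (insert Q' G) = Suc (Suc k)"
      using G Q' by (auto simp: family_def pairwise_insert orthogonal_def inner_commute)
    then show ?case
      by blast
  qed
  then obtain G where G: "family G" "card G = DIM('a)"
    using DIM_positive by (metis Suc_pred)
  have "X \<notin> G" "X \<noteq> 0"
    using G(1) X W by (auto simp: family_def Sph_iff)
  have "pairwise orthogonal (insert X G)"
    using G(1) by (auto simp: family_def pairwise_insert orthogonal_def inner_commute)
  moreover have "0 \<notin> insert X G"
    using G(1) \<open>X \<noteq> 0\<close> by (auto simp: family_def Sph_iff)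
  ultimately have "card (insert X G) \<le> DIM('a)"
    using pairwise_orthogonal_independent independent_bound by blast
  with G \<open>X \<notin> G\<close> show False
    by (simp add: family_def)
qed

lemma subset_spolar_if_constant_width:
  fixes W :: "'a::euclidean_space set"
  assumes scb: "spherical_convex_body W" and cw: "constant_width W (pi / 2)"
  shows "W \<subseteq> spolar W"
proof (rule ccontr)
  note W = spherical_convex_bodyD[OF scb]
  assume "\<not> W \<subseteq> spolar W"
  then obtain X0 Y0 where XY0: "X0 \<in> W" "Y0 \<in> W" "Y0 \<bullet> X0 < 0"
    using W(1) by (force simp: spolar_def hemi_def)
  have "continuous_on (W \<times> W) (\<lambda>q. fst q \<bullet> snd q)"
    by (intro continuous_intros)
  then obtain q where q: "q \<in> W \<times> W" "\<forall>q'\<in>W \<times> W. fst q \<bullet> snd q \<le> fst q' \<bullet> snd q'"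
    using continuous_attains_inf[OF compact_Times[OF W(2) W(2)]] W(3) by blast
  obtain X Y where "q = (X, Y)"
    by fastforce
  with q have XY: "X \<in> W" "Y \<in> W" and min: "\<And>V U. V \<in> W \<Longrightarrow> U \<in> W \<Longrightarrow> X \<bullet> Y \<le> V \<bullet> U"
    by auto
  define c where "c = X \<bullet> Y"
  have S: "X \<in> Sph" "Y \<in> Sph"
    using XY W(1) by auto
  have "c < 0"
    using min[OF XY0(2,1)] XY0(3) by (simp add: c_def)
  have "Y \<noteq> - X"
    using W(1) W(5)[OF XY] zero_in_sarc_antipodal[of X] by (auto simp: Sph_iff)
  have "Y \<noteq> X"
    using S \<open>c < 0\<close> by (auto simp: c_def Sph_iff)
  define p where "p = Y - c *\<^sub>R X"
  have "p \<noteq> 0"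
    using orthogonal_component_nonzero[OF S \<open>Y \<noteq> X\<close> \<open>Y \<noteq> - X\<close>] by (simp add: p_def c_def)
  have "X \<bullet> p = 0"
    using S by (simp add: p_def inner_diff_right Sph_iff c_def)
  have "0 \<le> Z \<bullet> p" if "Z \<in> W" for Z
  proof -
    have "c * (X \<bullet> Z) \<le> Z \<bullet> Y"
      unfolding c_def using S W(1) that \<open>c < 0\<close> min XY W(5)[OF XY(1) that]
      by (intro arc_min_first_order) (auto simp: c_def)
    then show ?thesis
      by (simp add: p_def inner_diff_right inner_commute)
  qed
  then have "supports (sgn p) W"
    using supports_sgn W(1) XY(1) \<open>X \<bullet> p = 0\<close> \<open>p \<noteq> 0\<close> by blast
  moreover have "X \<bullet> sgn p = 0"
    using \<open>X \<bullet> p = 0\<close> by (simp add: inner_sgn_right)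
  ultimately obtain Q where Q: "Q \<in> Sph" "supports Q W" "Q \<bullet> sgn p = 0" "Q \<bullet> X \<noteq> 0"
    using exists_supporting_orthogonal_off_point[OF cw W(1,4) XY(1) sgn_in_Sph[OF \<open>p \<noteq> 0\<close>]]
    by blast
  have "Q \<bullet> Y = c * (Q \<bullet> X)"
    using Q(3) \<open>p \<noteq> 0\<close> by (simp add: inner_sgn_right p_def inner_diff_right)
  moreover have "0 \<le> Q \<bullet> X" "0 \<le> Q \<bullet> Y"
    using Q(2) XY by (auto simp: supports_def hemi_def)
  ultimately show False
    using \<open>c < 0\<close> Q(4) by (simp add: zero_le_mult_iff)
qed

lemma spolar_subset_if_constant_width:
  fixes W :: "'a::euclidean_space set"
  assumes scb: "spherical_convex_body W" and cw: "constant_width W (pi / 2)"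
  shows "spolar W \<subseteq> W"
proof
  note W = spherical_convex_bodyD[OF scb]
  fix X assume "X \<in> spolar W"
  then have XS: "X \<in> Sph" and polar: "\<And>Z. Z \<in> W \<Longrightarrow> 0 \<le> Z \<bullet> X"
    by (auto simp: spolar_def hemi_def inner_commute)
  show "X \<in> W"
  proof (rule ccontr)
    assume "X \<notin> W"
    have "continuous_on W (\<lambda>Z. X \<bullet> Z)"
      by (intro continuous_intros)
    then obtain Y where Y: "Y \<in> W" and max: "\<And>Z. Z \<in> W \<Longrightarrow> X \<bullet> Z \<le> X \<bullet> Y"
      using continuous_attains_sup[OF W(2,3)] by blast
    define c where "c = X \<bullet> Y"
    have YS: "Y \<in> Sph"
      using Y W(1) by auto
    have "0 \<le> c"
      using polar[OF Y] by (simp add: c_def inner_commute)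
    have "X \<noteq> Y" "X \<noteq> - Y"
      using \<open>X \<notin> W\<close> Y \<open>0 \<le> c\<close> YS by (auto simp: c_def Sph_iff)
    define p where "p = c *\<^sub>R Y - X"
    have "p \<noteq> 0"
      using orthogonal_component_nonzero[OF YS XS \<open>X \<noteq> Y\<close> \<open>X \<noteq> - Y\<close>]
      by (simp add: p_def c_def inner_commute)
    have "Y \<bullet> p = 0"
      using YS by (simp add: p_def inner_diff_right Sph_iff c_def inner_commute)
    have p_nonneg: "0 \<le> Z \<bullet> p" if "Z \<in> W" for Z
    proof -
      have "(Y \<bullet> - X) * (Y \<bullet> Z) \<le> Z \<bullet> - X"
        using YS XS W(1) that \<open>0 \<le> c\<close> max W(5)[OF Y that]
        by (intro arc_min_first_order) (auto simp: c_def inner_commute)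
      then show ?thesis
        by (simp add: p_def c_def inner_diff_right inner_commute)
    qed
    have "X \<bullet> p < 0"
    proof -
      have "c \<le> 1" "c \<noteq> 1"
        using Sph_inner_bounds[OF XS YS] Sph_inner_eq_1[OF XS YS] \<open>X \<noteq> Y\<close> by (auto simp: c_def)
      then have "c * c < 1"
        using \<open>0 \<le> c\<close> mult_right_mono[of c 1 c] by linarith
      then show ?thesis
        using XS by (simp add: p_def inner_diff_right Sph_iff c_def)
    qed
    have supp_p: "supports (sgn p) W"
      using supports_sgn W(1) p_nonneg Y \<open>Y \<bullet> p = 0\<close> \<open>p \<noteq> 0\<close> by blast
    obtain Z0 where "Z0 \<in> W" "Z0 \<bullet> sgn p \<noteq> 0"
      using exists_not_orthogonal[OF W(4) sgn_in_Sph[OF \<open>p \<noteq> 0\<close>]] .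
    then have "0 < Z0 \<bullet> p"
      using p_nonneg[of Z0] by (auto simp: inner_sgn_right)
    then obtain t Z1 where t: "0 \<le> t" "\<And>Z. Z \<in> W \<Longrightarrow> 0 \<le> Z \<bullet> (X - t *\<^sub>R p)"
        "Z1 \<in> W" "Z1 \<bullet> (X - t *\<^sub>R p) = 0"
      using exists_supporting_tilt[OF W(2) polar \<open>Z0 \<in> W\<close>] by blast
    define V where "V = X - t *\<^sub>R p"
    have "p \<bullet> V = X \<bullet> p - t * (p \<bullet> p)"
      by (simp add: V_def inner_diff_right inner_commute)
    moreover have "0 \<le> t * (p \<bullet> p)"
      using t(1) by simp
    ultimately have "p \<bullet> V < 0"
      using \<open>X \<bullet> p < 0\<close> by linarith
    then have "V \<noteq> 0"
      by auto
    have "supports (sgn V) W"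
      using supports_sgn W(1) t(2-4) \<open>V \<noteq> 0\<close> unfolding V_def by blast
    then have "0 \<le> sgn p \<bullet> sgn V"
      using supporting_inner_nonneg[OF cw W(4) sgn_in_Sph[OF \<open>p \<noteq> 0\<close>] supp_p
          sgn_in_Sph[OF \<open>V \<noteq> 0\<close>]] by blast
    with \<open>p \<bullet> V < 0\<close> \<open>p \<noteq> 0\<close> \<open>V \<noteq> 0\<close> show False
      by (simp add: inner_sgn_left inner_sgn_right zero_le_divide_iff mult_le_0_iff)
  qed
qed

lemma constant_width_if_self_polar:
  assumes scb: "spherical_convex_body W" and self_polar: "W = spolar W"
  shows "constant_width W (pi / 2)"
  unfolding constant_width_def
proof (intro conjI ballI impI)
  note W = spherical_convex_bodyD[OF scb]
  have pole_in_W: "Q \<in> W" if "Q \<in> Sph" "W \<subseteq> hemi Q" for Q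
    using that self_polar by (auto simp: spolar_def hemi_def inner_commute)
  have polar: "0 \<le> Z \<bullet> Q" if "Q \<in> W" "Z \<in> W" for Q Z
    using that self_polar by (auto simp: spolar_def hemi_def)
  show "0 < pi / 2" "pi / 2 < pi"
    by auto
  fix P assume P: "P \<in> Sph" "supports P W"
  then obtain X where X: "X \<in> (top_of_set Sph) frontier_of W" "X \<in> (top_of_set Sph) frontier_of (hemi P)"
    by (auto simp: supports_def)
  have "closedin (top_of_set Sph) W"
    using W(1,2) compact_imp_closed closed_subset by blast
  then have "X \<in> W"
    using X(1) closure_of_closedin by (auto simp: frontier_of_def)
  have "X \<bullet> P = 0"
    using frontier_of_hemi[OF X(2)] .
  have "W \<subseteq> hemi P"
    using P(2) by (simp add: supports_def)
  then have "P \<in> W"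
    using pole_in_W P(1) by blast
  have "W \<subseteq> hemi X"
    using W(1) polar[OF \<open>X \<in> W\<close>] by (auto simp: hemi_def inner_commute)
  moreover have "X \<in> Sph"
    using \<open>X \<in> W\<close> W(1) by auto
  ultimately have "supports X W"
    using supportsI \<open>P \<in> W\<close> \<open>X \<bullet> P = 0\<close> by (metis inner_commute)
  with \<open>W \<subseteq> hemi P\<close> \<open>X \<in> Sph\<close> \<open>X \<bullet> P = 0\<close> P(1) \<open>W \<subseteq> hemi X\<close>
  have "lune_thickness P X \<in> width_candidates P W"
    unfolding width_candidates_def by (force simp: Sph_iff)
  moreover have "lune_thickness P X = pi / 2"
    using \<open>X \<bullet> P = 0\<close> by (simp add: lune_thickness_def inner_commute)
  moreover have "pi / 2 \<le> x" if x: "x \<in> width_candidates P W" for x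
  proof -
    obtain Q where Q: "x = pi - arccos (P \<bullet> Q)" "Q \<in> Sph" "W \<subseteq> hemi Q"
      using x unfolding width_candidates_def lune_thickness_def by blast
    have "0 \<le> P \<bullet> Q"
      using polar[OF pole_in_W[OF Q(2,3)] \<open>P \<in> W\<close>] by simp
    then have "arccos (P \<bullet> Q) \<le> arccos 0"
      using Sph_inner_bounds[OF P(1) Q(2)] by (intro arccos_le_arccos) auto
    then show ?thesis
      using Q(1) by simp
  qed
  ultimately show "is_width P W (pi / 2)"
    unfolding is_width_def by metis
qed

theorem proposition3p2:
  fixes W :: "'a::euclidean_space set"
  assumes "DIM('a) \<ge> 2"
    and "spherical_convex_body W"
  shows "W = spolar W \<longleftrightarrow> constant_width W (pi / 2)"
  using constant_width_if_self_polar[OF assms(2)] spolar_subset_if_constant_width[OF assms(2)]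
    subset_spolar_if_constant_width[OF assms(2)]
  by blast

end
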